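(* For a thermodynamic Stephani universe with $b''(R)=0$, one has $A_1=0$; if moreover $A_2=c_2$ is constant, then $\chi(\pi)=\lambda\pi+\lambda-\frac23$ with $\lambda=1+c_2/3$. If $\lambda\in(\lambda_\eta,5/6)$, $\lambda_\eta=(13-2\sqrt{30})/3$, then for all $\pi\in(0,1)$: $0<\chi(\pi)<1$, $\zeta(\pi)>0$ and $\eta(\pi)>0$. In particular, if $b''=0$ and $9+16A_1+12A_2=0$, then $A_2=-3/4$, $\lambda=3/4$, $\chi(\pi)=(9\pi+1)/12$, and these inequalities hold on all of $(0,1)$.
   Context: Thermodynamic Stephani universe: $ds^2=-\alpha^2dt^2+\Omega^2(dx^2+dy^2+dz^2)$, $L=R(t)/(1+b(t)w)$, $\Omega=\frac{w}{2z}L$, $\alpha=R\partial_R\ln L$, $w=2z/(1+\frac\varepsilon4r^2)$, $\varepsilon\in\{0,\pm1\}$; functions of $t$ regarded as functions of $R$ (prime $=d/dR$); $\rho=\frac{3}{R^2}(\dot R^2+\varepsilon-4b^2)$, $a(R)=-R\rho'(R)/(3\rho)$, $A_1=-\frac{Rb''}{a^2b'}$, $A_2=\frac{Rb''}{ab'}-\frac{a'R}{a^2}-\frac1a$, and the indicatrix is $\chi=\pi+\frac13+\frac13(\pi+1)[(\pi+1)A_1+A_2]$, $\pi=p/\rho$. $\zeta(\pi)=(1+\pi)(\chi-\pi)\chi'+2\chi(1-\chi)$, $\eta(\pi)=(2\pi+1)\chi-\pi$. *)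

theory Defs
  imports "HOL-Analysis.Analysis"
begin

text \<open>Thermodynamic Stephani universe data, all regarded as functions of R
  (prime = d/dR).  Rdot R is the value of dR/dt expressed as a function of R,
  eps is the curvature index, b is b(t) regarded as a function of R.\<close>

definition stephani_rho :: "(real \<Rightarrow> real) \<Rightarrow> real \<Rightarrow> (real \<Rightarrow> real) \<Rightarrow> real \<Rightarrow> real" where
  "stephani_rho Rdot eps b R = 3 / R\<^sup>2 * ((Rdot R)\<^sup>2 + eps - 4 * (b R)\<^sup>2)"

definition stephani_a :: "(real \<Rightarrow> real) \<Rightarrow> real \<Rightarrow> (real \<Rightarrow> real) \<Rightarrow> real \<Rightarrow> real" where
  "stephani_a Rdot eps b R =
     - R * deriv (stephani_rho Rdot eps b) R / (3 * stephani_rho Rdot eps b R)"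

definition stephani_A1 :: "(real \<Rightarrow> real) \<Rightarrow> real \<Rightarrow> (real \<Rightarrow> real) \<Rightarrow> real \<Rightarrow> real" where
  "stephani_A1 Rdot eps b R =
     - (R * deriv (deriv b) R) / ((stephani_a Rdot eps b R)\<^sup>2 * deriv b R)"

definition stephani_A2 :: "(real \<Rightarrow> real) \<Rightarrow> real \<Rightarrow> (real \<Rightarrow> real) \<Rightarrow> real \<Rightarrow> real" where
  "stephani_A2 Rdot eps b R =
     R * deriv (deriv b) R / (stephani_a Rdot eps b R * deriv b R)
     - deriv (stephani_a Rdot eps b) R * R / (stephani_a Rdot eps b R)\<^sup>2
     - 1 / stephani_a Rdot eps b R"

text \<open>Indicatrix chi as a function of pi = p/rho, at the point R.\<close>
definition indicatrix :: "(real \<Rightarrow> real) \<Rightarrow> real \<Rightarrow> (real \<Rightarrow> real) \<Rightarrow> real \<Rightarrow> real \<Rightarrow> real" where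
  "indicatrix Rdot eps b R = (\<lambda>p. p + 1/3 + 1/3 * (p + 1) *
      ((p + 1) * stephani_A1 Rdot eps b R + stephani_A2 Rdot eps b R))"

definition zeta_fn :: "(real \<Rightarrow> real) \<Rightarrow> real \<Rightarrow> real" where
  "zeta_fn chi p = (1 + p) * (chi p - p) * deriv chi p + 2 * chi p * (1 - chi p)"

definition eta_fn :: "(real \<Rightarrow> real) \<Rightarrow> real \<Rightarrow> real" where
  "eta_fn chi p = (2 * p + 1) * chi p - p"

definition lambda_eta :: real where
  "lambda_eta = (13 - 2 * sqrt 30) / 3"

end

theory Submission
  imports Defs "HOL-Library.Quadratic_Discriminant"
begin

text \<open>When b'' = 0 the A1 term of the indicatrix vanishes, so \<chi> is the affine map
  \<pi> \<mapsto> \<lambda>\<pi> + \<lambda> - 2/3 with \<lambda> = 1 + A2/3.  Then \<eta> is a quadratic in \<pi> with leading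
  coefficient 2\<lambda> and discriminant (\<lambda> - lambda_eta)(\<lambda> - (13 + 2\<surd>30)/3), hence positive
  everywhere once \<lambda> > lambda_eta; and \<zeta> is a concave quadratic in \<pi> + 1 whose values at
  \<pi> = 0 and \<pi> = 1 are (\<lambda> - 2/3)(10/3 - \<lambda>) and 4(\<lambda> - 2/3)(5/6 - \<lambda>), both positive
  because 2/3 < lambda_eta < \<lambda> < 5/6.  The case 9 + 16 A1 + 12 A2 = 0 is the instance \<lambda> = 3/4.\<close>

lemma quadratic_pos_if_discrim_neg:
  fixes a b c x :: real
  assumes "0 < a" and "discrim a b c < 0"
  shows "0 < a * x\<^sup>2 + b * x + c"
proof -
  have "4 * a * (a * x\<^sup>2 + b * x + c) = (2 * a * x + b)\<^sup>2 - discrim a b c"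
    by (simp add: discrim_def algebra_simps power2_eq_square)
  also have "\<dots> > 0"
    using assms(2) zero_le_power2[of "2 * a * x + b"] by linarith
  finally show ?thesis
    using assms(1) by (simp add: zero_less_mult_iff)
qed

lemma concave_quadratic_pos_between:
  fixes a b c s t x :: real
  assumes "a \<le> 0" and "s \<le> x" "x \<le> t"
    and "0 < a * s\<^sup>2 + b * s + c" "0 < a * t\<^sup>2 + b * t + c"
  shows "0 < a * x\<^sup>2 + b * x + c"
proof (cases "s = t")
  case True
  with assms show ?thesis by simp
next
  case False
  then have "0 < t - s" using assms by simp
  have "(t - s) * (a * x\<^sup>2 + b * x + c)
      = (t - x) * (a * s\<^sup>2 + b * s + c) + (x - s) * (a * t\<^sup>2 + b * t + c)
        - a * (x - s) * (t - x) * (t - s)"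
    by (simp add: algebra_simps power2_eq_square)
  also have "\<dots> > 0"
  proof -
    have "0 \<le> (- a) * ((x - s) * ((t - x) * (t - s)))"
      using assms \<open>0 < t - s\<close> by (intro mult_nonneg_nonneg) auto
    moreover have "0 \<le> (t - x) * (a * s\<^sup>2 + b * s + c)" "0 \<le> (x - s) * (a * t\<^sup>2 + b * t + c)"
      using assms by simp_all
    moreover have "0 < (t - x) * (a * s\<^sup>2 + b * s + c) \<or> 0 < (x - s) * (a * t\<^sup>2 + b * t + c)"
      using assms \<open>0 < t - s\<close> by (cases "x < t") auto
    ultimately show ?thesis by linarith
  qed
  finally show ?thesis
    using \<open>0 < t - s\<close> by (simp add: zero_less_mult_iff)
qed

lemma sqrt_30_bounds: "43/8 < sqrt (30::real)" "sqrt (30::real) < 11/2"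
proof -
  show "43/8 < sqrt (30::real)"
    by (rule real_less_rsqrt) (simp add: power2_eq_square)
  have "sqrt (30::real) < sqrt ((11/2)\<^sup>2)"
    by (subst real_sqrt_less_iff) (simp add: power2_eq_square)
  then show "sqrt (30::real) < 11/2"
    by simp
qed

lemma lambda_eta_bounds: "2/3 < lambda_eta" "lambda_eta < 3/4"
  using sqrt_30_bounds unfolding lambda_eta_def by auto

lemma deriv_affine: "deriv (\<lambda>p. lam * p + lam - 2/3) p = (lam::real)"
  by (rule DERIV_imp_deriv) (auto intro!: derivative_eq_intros)

lemma eta_fn_affine_pos:
  fixes lam p :: real
  assumes "lambda_eta < lam" and "lam < (13 + 2 * sqrt 30) / 3"
  shows "0 < eta_fn (\<lambda>p. lam * p + lam - 2/3) p"
proof -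
  have "discrim (2 * lam) (3 * lam - 7/3) (lam - 2/3)
      = (lam - lambda_eta) * (lam - (13 + 2 * sqrt 30) / 3)"
    by (simp add: discrim_def lambda_eta_def field_simps power2_eq_square)
  also have "\<dots> < 0"
    using assms by (simp add: mult_pos_neg)
  finally have "discrim (2 * lam) (3 * lam - 7/3) (lam - 2/3) < 0" .
  then have "0 < 2 * lam * p\<^sup>2 + (3 * lam - 7/3) * p + (lam - 2/3)"
    using assms(1) lambda_eta_bounds by (intro quadratic_pos_if_discrim_neg) auto
  also have "\<dots> = eta_fn (\<lambda>p. lam * p + lam - 2/3) p"
    by (simp add: eta_fn_def field_simps power2_eq_square)
  finally show ?thesis .
qed

lemma zeta_fn_affine_pos:
  fixes lam p :: real
  assumes "2/3 < lam" "lam < 5/6" and "0 \<le> p" "p \<le> 1"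
  shows "0 < zeta_fn (\<lambda>p. lam * p + lam - 2/3) p"
proof -
  let ?f = "\<lambda>q. - lam * (lam + 1) * q\<^sup>2 + 5 * lam * q + - 20/9"
  have "?f 1 = (lam - 2/3) * (10/3 - lam)" "?f 2 = 4 * (lam - 2/3) * (5/6 - lam)"
    by (simp_all add: field_simps power2_eq_square)
  then have pos: "0 < ?f 1" "0 < ?f 2"
    using assms by simp_all
  have "- lam * (lam + 1) \<le> 0"
    using assms by (simp add: mult_nonneg_nonneg)
  then have "0 < ?f (p + 1)"
    using concave_quadratic_pos_between[OF _ _ _ pos, of "p + 1"] assms by simp
  also have "?f (p + 1) = zeta_fn (\<lambda>p. lam * p + lam - 2/3) p"
    unfolding zeta_fn_def deriv_affine
    by (simp add: algebra_simps power2_eq_square) (simp add: field_simps)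
  finally show ?thesis .
qed

lemma affine_indicatrix_properties:
  fixes lam p :: real
  assumes "lambda_eta < lam" "lam < 5/6" and "p \<in> {0<..<1}"
  defines "chi \<equiv> \<lambda>p. lam * p + lam - 2/3"
  shows "0 < chi p \<and> chi p < 1 \<and> zeta_fn chi p > 0 \<and> eta_fn chi p > 0"
proof -
  have "2/3 < lam" using assms(1) lambda_eta_bounds by simp
  have "0 < lam * p" "lam * p < lam"
    using \<open>2/3 < lam\<close> assms(3) by simp_all
  then have "0 < chi p" "chi p < 1"
    using \<open>2/3 < lam\<close> assms(2) unfolding chi_def by linarith+
  moreover have "0 < zeta_fn chi p"
    using \<open>2/3 < lam\<close> assms(2,3) zeta_fn_affine_pos unfolding chi_def by simp
  moreover have "0 < eta_fn chi p"
    using assms(1,2) sqrt_30_bounds eta_fn_affine_pos unfolding chi_def by simp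
  ultimately show ?thesis by simp
qed

lemma stephani_A1_eq_0:
  assumes "(deriv b has_real_derivative 0) (at R)"
  shows "stephani_A1 Rdot eps b R = 0"
  using DERIV_imp_deriv[OF assms] unfolding stephani_A1_def by simp

lemma indicatrix_eq_affine:
  assumes "(deriv b has_real_derivative 0) (at R)"
  shows "indicatrix Rdot eps b R
    = (\<lambda>p. (1 + stephani_A2 Rdot eps b R / 3) * p + (1 + stephani_A2 Rdot eps b R / 3) - 2/3)"
  using stephani_A1_eq_0[OF assms] unfolding indicatrix_def by (auto simp: fun_eq_iff algebra_simps)

theorem mainTheorem14:
  fixes Rdot b :: "real \<Rightarrow> real" and eps :: real and I :: "real set"
  assumes eps: "eps \<in> {-1, 0, 1}"
    and I: "open I" "I \<subseteq> {0<..}"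
    and bpp: "\<forall>R\<in>I. (deriv b has_real_derivative 0) (at R)"
  shows "(\<forall>R\<in>I. stephani_A1 Rdot eps b R = 0)
    \<and> (\<forall>c2. (\<forall>R\<in>I. stephani_A2 Rdot eps b R = c2) \<longrightarrow>
          (let lam = 1 + c2 / 3 in
            (\<forall>R\<in>I. \<forall>p. indicatrix Rdot eps b R p = lam * p + lam - 2/3)
            \<and> (lambda_eta < lam \<and> lam < 5/6 \<longrightarrow>
                (\<forall>R\<in>I. \<forall>p\<in>{0<..<1}.
                   0 < indicatrix Rdot eps b R p \<and> indicatrix Rdot eps b R p < 1
                   \<and> zeta_fn (indicatrix Rdot eps b R) p > 0
                   \<and> eta_fn (indicatrix Rdot eps b R) p > 0))))
    \<and> ((\<forall>R\<in>I. 9 + 16 * stephani_A1 Rdot eps b R + 12 * stephani_A2 Rdot eps b R = 0) \<longrightarrow>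
          (\<forall>R\<in>I. stephani_A2 Rdot eps b R = -3/4
             \<and> 1 + stephani_A2 Rdot eps b R / 3 = 3/4
             \<and> (\<forall>p. indicatrix Rdot eps b R p = (9 * p + 1) / 12)
             \<and> (\<forall>p\<in>{0<..<1}.
                   0 < indicatrix Rdot eps b R p \<and> indicatrix Rdot eps b R p < 1
                   \<and> zeta_fn (indicatrix Rdot eps b R) p > 0
                   \<and> eta_fn (indicatrix Rdot eps b R) p > 0)))"
proof -
  have A1: "\<forall>R\<in>I. stephani_A1 Rdot eps b R = 0"
    using bpp stephani_A1_eq_0 by blast
  have constant_A2: "let lam = 1 + c2 / 3 in
      (\<forall>R\<in>I. \<forall>p. indicatrix Rdot eps b R p = lam * p + lam - 2/3)
      \<and> (lambda_eta < lam \<and> lam < 5/6 \<longrightarrow>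
          (\<forall>R\<in>I. \<forall>p\<in>{0<..<1}.
             0 < indicatrix Rdot eps b R p \<and> indicatrix Rdot eps b R p < 1
             \<and> zeta_fn (indicatrix Rdot eps b R) p > 0
             \<and> eta_fn (indicatrix Rdot eps b R) p > 0))"
    if "\<forall>R\<in>I. stephani_A2 Rdot eps b R = c2" for c2
  proof -
    have "indicatrix Rdot eps b R = (\<lambda>p. (1 + c2 / 3) * p + (1 + c2 / 3) - 2/3)" if "R \<in> I" for R
      using bpp \<open>\<forall>R\<in>I. stephani_A2 Rdot eps b R = c2\<close> that indicatrix_eq_affine by simp
    then show ?thesis
      using affine_indicatrix_properties[of "1 + c2 / 3"] unfolding Let_def by simp
  qed
  have special_A2: "\<forall>R\<in>I. stephani_A2 Rdot eps b R = -3/4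
         \<and> 1 + stephani_A2 Rdot eps b R / 3 = 3/4
         \<and> (\<forall>p. indicatrix Rdot eps b R p = (9 * p + 1) / 12)
         \<and> (\<forall>p\<in>{0<..<1}.
               0 < indicatrix Rdot eps b R p \<and> indicatrix Rdot eps b R p < 1
               \<and> zeta_fn (indicatrix Rdot eps b R) p > 0
               \<and> eta_fn (indicatrix Rdot eps b R) p > 0)"
    if "\<forall>R\<in>I. 9 + 16 * stephani_A1 Rdot eps b R + 12 * stephani_A2 Rdot eps b R = 0"
  proof -
    have A2: "\<forall>R\<in>I. stephani_A2 Rdot eps b R = -3/4"
      using that A1 by fastforce
    show ?thesis
      using constant_A2[OF A2] A2 lambda_eta_bounds unfolding Let_def
      by (simp add: add_divide_distrib)
  qed
  show ?thesis
    using A1 constant_A2 special_A2 by blast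
qed

end
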